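(* Let $\alpha=1/4$, so each of the four user types $(x,e)\in\{1/4,3/4\}^2$ arrives with mass $1/4$ per period. Let $q_1^*,q_3^*\in(0,1)$ with $q_1^*\neq q_3^*$ be the status quo qualities of segments $x=1/4$ and $x=3/4$. Then there exist treatment qualities $q_1,q_3\in(0,1)$ such that (i) the experimental ARQ increases: $\frac{q_3}{1-q_3^*}+\frac{q_1}{1-q_1^*}>\frac{q_3^*}{1-q_3^*}+\frac{q_1^*}{1-q_1^*}$; (ii) the experimental churn rate decreases: $\dfrac{\frac{1-q_3}{1-q_3^*}+\frac{1-q_1}{1-q_1^*}}{2\left(\frac{4}{3(1-q_3^* )}+\frac{4}{3(1-q_1^* )}\right)}<\dfrac{1}{\frac{4}{3(1-q_3^* )}+\frac{4}{3(1-q_1^* )}}$; and (iii) the treatment's steady-state total user population is smaller: $\frac{4}{3(1-q_3)}+\frac{4}{3(1-q_1)}<\frac{4}{3(1-q_3^* )}+\frac{4}{3(1-q_1^* )}$.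
   Context: Model: a type-$(x,e)$ user churns each period with probability $(1-q(x))(1-e)$, where $q(x)\in(0,1)$ is the algorithm's recommendation quality for segment $x$; the steady-state mass of type $(x,e)$ is $F(x,e)/((1-q(x))(1-e))$, here with $F\equiv 1/4$. The experimental ARQ and churn rate of a treatment are computed by applying the treatment qualities $q_1=q(1/4)$, $q_3=q(3/4)$ for one period to the status quo's steady-state population (status quo qualities $q_1^*,q_3^*$); inequalities (i)–(iii) are these comparisons written out (in (i) both sides are the ARQ numerators over the common positive denominator $\frac{4}{3(1-q_3^* )}+\frac{4}{3(1-q_1^* )}$, after cancelling the factor $4/3$). *)

theory Defs
  imports Complex_Main
begin

end

theory Submission
  imports Defs
begin

text \<open>Write \<open>u = 1 - q\<^sub>3\<^sup>*\<close>, \<open>v = 1 - q\<^sub>1\<^sup>*\<close> for the status quo churn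
  probabilities and \<open>x = 1 - q\<^sub>3\<close>, \<open>y = 1 - q\<^sub>1\<close> for the treatment ones. Then (i) and (ii)
  both say \<open>x/u + y/v < 2\<close>, and (iii) says \<open>1/x + 1/y < 1/u + 1/v\<close>. The point \<open>(u, v)\<close>
  and the diagonal point \<open>(h, h)\<close>, with \<open>h\<close> the harmonic mean of \<open>u\<close> and \<open>v\<close>, both
  satisfy the two conditions with equality. Since \<open>t \<mapsto> 1/t\<close> is strictly convex, their
  midpoint satisfies the inequality for \<open>1/x + 1/y\<close> strictly while still lying on the
  line \<open>x/u + y/v = 2\<close>; shrinking it by a factor slightly below \<open>1\<close> makes both inequalities strict.\<close>

lemma inverse_midpoint_less:
  fixes a b :: real
  assumes "0 < a" "0 < b" "a \<noteq> b"
  shows "1 / ((a + b) / 2) < (1 / a + 1 / b) / 2"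
proof -
  have "(a - b)\<^sup>2 > 0"
    using assms(3) by simp
  then have "4 * a * b < (a + b)\<^sup>2"
    by (simp add: power2_eq_square algebra_simps)
  then show ?thesis
    using assms by (simp add: field_simps power2_eq_square)
qed

lemma exists_on_line_inverse_sum_less:
  fixes u v :: real
  assumes u: "0 < u" "u < 1" and v: "0 < v" "v < 1" and "u \<noteq> v"
  shows "\<exists>a b. 0 < a \<and> a < 1 \<and> 0 < b \<and> b < 1 \<and> a / u + b / v = 2
           \<and> 1 / a + 1 / b < 1 / u + 1 / v"
proof -
  define S where "S = 1 / u + 1 / v"
  define h where "h = 2 / S"
  have "1 / u > 1" "1 / v > 1"
    using u v by simp_all
  then have "S > 2"
    by (simp add: S_def)
  then have h: "0 < h" "h < 1" and hS: "h * S = 2"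
    by (simp_all add: h_def)
  have "u \<noteq> h" "v \<noteq> h"
    using \<open>u \<noteq> v\<close> u v hS by (auto simp: S_def field_simps)
  define a where "a = (u + h) / 2"
  define b where "b = (v + h) / 2"
  have "a / u + b / v = 1 + h * S / 2"
    using u v by (simp add: a_def b_def S_def field_simps)
  also have "\<dots> = 2"
    using hS by simp
  finally have line: "a / u + b / v = 2" .
  have "1 / a + 1 / b < (1 / u + 1 / h) / 2 + (1 / v + 1 / h) / 2"
    unfolding a_def b_def
    using inverse_midpoint_less[of u h] inverse_midpoint_less[of v h] u v h
      \<open>u \<noteq> h\<close> \<open>v \<noteq> h\<close> by linarith
  also have "\<dots> = 1 / u + 1 / v"
    by (simp add: h_def S_def add_divide_distrib)
  finally have "1 / a + 1 / b < 1 / u + 1 / v" .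
  moreover have "0 < a" "a < 1" "0 < b" "b < 1"
    using u v h by (simp_all add: a_def b_def)
  ultimately show ?thesis
    using line by blast
qed

lemma exists_below_line_inverse_sum_less:
  fixes u v :: real
  assumes u: "0 < u" "u < 1" and v: "0 < v" "v < 1" and "u \<noteq> v"
  shows "\<exists>x y. 0 < x \<and> x < 1 \<and> 0 < y \<and> y < 1 \<and> x / u + y / v < 2
           \<and> 1 / x + 1 / y < 1 / u + 1 / v"
proof -
  obtain a b where ab: "0 < a" "a < 1" "0 < b" "b < 1"
    and line: "a / u + b / v = 2" and below: "1 / a + 1 / b < 1 / u + 1 / v"
    using exists_on_line_inverse_sum_less[OF assms] by blast
  define S where "S = 1 / u + 1 / v"
  have "S > 0"
    using u v by (simp add: S_def add_pos_pos)
  moreover have "1 / a + 1 / b < S"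
    using below by (simp add: S_def)
  ultimately have "(1 / a + 1 / b) / S < 1"
    by simp
  then obtain c where c: "(1 / a + 1 / b) / S < c" "c < 1"
    using dense by blast
  have "(1 / a + 1 / b) / S > 0"
    using ab \<open>S > 0\<close> by (simp add: add_pos_pos)
  with c(1) have "c > 0"
    by linarith
  have "c * a / u + c * b / v = c * (a / u + b / v)"
    by (simp add: distrib_left)
  also have "\<dots> = c * 2"
    by (simp only: line)
  finally have "c * a / u + c * b / v = c * 2" .
  moreover have "1 / (c * a) + 1 / (c * b) = (1 / a + 1 / b) / c"
    by (simp add: add_divide_distrib mult.commute)
  moreover have "(1 / a + 1 / b) / c < S"
    using c(1) \<open>c > 0\<close> \<open>S > 0\<close> by (simp add: field_simps)
  moreover have "0 < c * a" "0 < c * b"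
    using ab \<open>c > 0\<close> by simp_all
  moreover have "c * a < 1" "c * b < 1"
    using mult_strict_mono'[of c 1 a 1] mult_strict_mono'[of c 1 b 1] ab c \<open>c > 0\<close> by simp_all
  ultimately show ?thesis
    using c(2) by (intro exI[of _ "c * a"] exI[of _ "c * b"]) (simp add: S_def)
qed

theorem corollary2:
  fixes q1s q3s :: real
  assumes "0 < q1s" "q1s < 1" "0 < q3s" "q3s < 1" "q1s \<noteq> q3s"
  shows "\<exists>q1 q3 :: real. 0 < q1 \<and> q1 < 1 \<and> 0 < q3 \<and> q3 < 1 \<and>
     q3 / (1 - q3s) + q1 / (1 - q1s) > q3s / (1 - q3s) + q1s / (1 - q1s) \<and>
     ((1 - q3) / (1 - q3s) + (1 - q1) / (1 - q1s))
        / (2 * (4 / (3 * (1 - q3s)) + 4 / (3 * (1 - q1s))))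
       < 1 / (4 / (3 * (1 - q3s)) + 4 / (3 * (1 - q1s))) \<and>
     4 / (3 * (1 - q3)) + 4 / (3 * (1 - q1)) < 4 / (3 * (1 - q3s)) + 4 / (3 * (1 - q1s))"
proof -
  define u where "u = 1 - q3s"
  define v where "v = 1 - q1s"
  have u: "0 < u" "u < 1" and v: "0 < v" "v < 1" and "u \<noteq> v"
    using assms by (auto simp: u_def v_def)
  obtain x y where xy: "0 < x" "x < 1" "0 < y" "y < 1"
    and line: "x / u + y / v < 2" and below: "1 / x + 1 / y < 1 / u + 1 / v"
    using exists_below_line_inverse_sum_less[OF u v \<open>u \<noteq> v\<close>] by blast
  have arq: "(1 - x) / u + (1 - y) / v > (1 - u) / u + (1 - v) / v"
    using line u v by (simp add: diff_divide_distrib)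
  define P where "P = 4 / (3 * u) + 4 / (3 * v)"
  have "P > 0"
    using u v by (simp add: P_def add_pos_pos)
  then have churn: "(x / u + y / v) / (2 * P) < 1 / P"
    using divide_strict_right_mono[OF line, of "2 * P"] by simp
  have population: "4 / (3 * x) + 4 / (3 * y) < 4 / (3 * u) + 4 / (3 * v)"
    using below by simp
  show ?thesis
    using xy arq churn population
    by (intro exI[of _ "1 - y"] exI[of _ "1 - x"]) (simp add: u_def v_def P_def)
qed

end
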